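(* Let $\mathfrak{C}\subset(\mathbb{C}\setminus\{0\})^2\times\mathbb{C}$ be the hypersurface in coordinates $(s,u,c)$ defined by $$0=(s-s^{-1})(u-u^{-1})+c\,(s^{-2}u^{-2}-u^{-2}-s^{-2}+4-s^2-u^2+s^2u^2)+c^2(2s^{-1}u^{-1}-su^{-1}-s^{-1}u+2su)+c^3,$$ let $e:\mathfrak{C}\to(\mathbb{C}\setminus\{0\})^4$, $e(s,u,c)=(s,t,u,v)$ with $$t=s^{-2}-s^{-2}u^2+u^2+c\,(2s^{-1}u+s^{-3}u^{-1}-s^{-3}u)+c^2s^{-2},\qquad v=u^{-2}-u^{-2}s^2+s^2+c\,(2u^{-1}s+u^{-3}s^{-1}-u^{-3}s)+c^2u^{-2},$$ and let $\mathfrak{E}_0$ be the Zariski closure of $e(\mathfrak{C})$. Let $\overline{\mathfrak{C}}\subset(\mathbb{C}\setminus\{0\})^2\times\mathbb{C}$ be the hypersurface in coordinates $(\bar s,\bar u,d)$ defined by $$0=\bar s\bar u(\bar s-1)(\bar u-1)+d\,(1-\bar s-\bar u+4\bar s\bar u-\bar s^2\bar u-\bar s\bar u^2+\bar s^2\bar u^2)+d^2(2-\bar s-\bar u+2\bar s\bar u)+d^3,$$ let $\bar e:\overline{\mathfrak{C}}\to(\mathbb{C}\setminus\{0\})^4$, $\bar e(\bar s,\bar u,d)=(\bar s,\bar t,\bar u,\bar v)$ with $$\bar t=\bar s^{-1}-\bar s^{-1}\bar u+\bar u+d\,(2\bar s^{-1}+\bar s^{-2}\bar u^{-1}-\bar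 s^{-2})+d^2\bar s^{-2}\bar u^{-1},\qquad \bar v=\bar u^{-1}-\bar u^{-1}\bar s+\bar s+d\,(2\bar u^{-1}+\bar u^{-2}\bar s^{-1}-\bar u^{-2})+d^2\bar u^{-2}\bar s^{-1},$$ and let $\overline{\mathfrak{E}}_0$ be the Zariski closure of $\bar e(\overline{\mathfrak{C}})$. Then $\mathfrak{C}$ and $\mathfrak{E}_0$ are birationally equivalent, and $\overline{\mathfrak{C}}$ and $\overline{\mathfrak{E}}_0$ are birationally equivalent.
   Context: Here $W$ is the complement of the right-handed Whitehead link, with $\pi_1(W)=\langle\mathcal{M}_0,\mathcal{M}_1\mid \mathcal{M}_1\mathcal{M}_0\mathcal{M}_1\mathcal{M}_0^{-1}\mathcal{M}_1^{-1}\mathcal{M}_0^{-1}\mathcal{M}_1\mathcal{M}_0=\mathcal{M}_0\mathcal{M}_1\mathcal{M}_0^{-1}\mathcal{M}_1^{-1}\mathcal{M}_0^{-1}\mathcal{M}_1\mathcal{M}_0\mathcal{M}_1\rangle$. $\mathfrak{C}$ is the (irreducible) variety of representations $\rho(\mathcal{M}_0)=\begin{pmatrix}s&c\\0&s^{-1}\end{pmatrix}$, $\rho(\mathcal{M}_1)=\begin{pmatrix}u&0\\1&u^{-1}\end{pmatrix}$ into $SL_2(\mathbb{C})$, and $\overline{\mathfrak{C}}$ the analogous variety of representations $\mathcal{M}_0\mapsto\begin{pmatrix}\bar s&d\\0&1\end{pmatrix}$, $\mathcal{M}_1\mapsto\begin{pmatrix}\bar u&0\\1&1\end{pmatrix}$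 into $GL_2(\mathbb{C})$ (corresponding to $PSL_2(\mathbb{C})$-representations). The maps $e,\bar e$ record the upper-left entries of the images of $\mathcal{M}_0$, $\mathcal{L}_0^t$, $\mathcal{M}_1$, $\mathcal{L}_1^t$, where $\mathcal{L}_0^t=\mathcal{M}_0^{-1}\mathcal{M}_1\mathcal{M}_0\mathcal{M}_1^{-1}\mathcal{M}_0^{-1}\mathcal{M}_1^{-1}\mathcal{M}_0\mathcal{M}_1$ and $\mathcal{L}_1^t=\mathcal{M}_1^{-1}\mathcal{M}_0\mathcal{M}_1\mathcal{M}_0^{-1}\mathcal{M}_1^{-1}\mathcal{M}_0^{-1}\mathcal{M}_1\mathcal{M}_0$ are the null-homologous longitudes; $\mathfrak{E}_0$ and $\overline{\mathfrak{E}}_0$ are the components of the $SL_2(\mathbb{C})$- and $PSL_2(\mathbb{C})$-eigenvalue varieties of $W$ corresponding to the Dehn surgery component. *)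

theory Defs
  imports "HOL-Analysis.Analysis"
begin

inductive polyfun :: "(complex^'n \<Rightarrow> complex) \<Rightarrow> bool" where
  pf_const: "polyfun (\<lambda>x. c)"
| pf_coord: "polyfun (\<lambda>x. x $ i)"
| pf_add: "polyfun f \<Longrightarrow> polyfun g \<Longrightarrow> polyfun (\<lambda>x. f x + g x)"
| pf_mult: "polyfun f \<Longrightarrow> polyfun g \<Longrightarrow> polyfun (\<lambda>x. f x * g x)"

definition zariski_closed :: "(complex^'n) set \<Rightarrow> bool" where
  "zariski_closed S \<longleftrightarrow> (\<exists>F. (\<forall>f\<in>F. polyfun f) \<and> S = {x. \<forall>f\<in>F. f x = 0})"

definition zariski_closure :: "(complex^'n) set \<Rightarrow> (complex^'n) set" where
  "zariski_closure A = \<Inter>{S. zariski_closed S \<and> A \<subseteq> S}"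

definition open_dense_in :: "(complex^'n) set \<Rightarrow> (complex^'n) set \<Rightarrow> bool" where
  "open_dense_in U X \<longleftrightarrow> U \<subseteq> X \<and> (\<exists>S. zariski_closed S \<and> U = X - S) \<and> X \<subseteq> zariski_closure U"

definition rational_on :: "(complex^'m \<Rightarrow> complex^'n) \<Rightarrow> (complex^'m) set \<Rightarrow> bool" where
  "rational_on f U \<longleftrightarrow> (\<exists>P Q. (\<forall>i. polyfun (P i) \<and> polyfun (Q i)) \<and>
      (\<forall>x\<in>U. \<forall>i. Q i x \<noteq> 0 \<and> f x $ i = P i x / Q i x))"

definition birationally_equivalent :: "(complex^'m) set \<Rightarrow> (complex^'n) set \<Rightarrow> bool" where
  "birationally_equivalent X Y \<longleftrightarrow>
     (\<exists>U V f g. open_dense_in U X \<and> open_dense_in V Y \<and>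
        rational_on f U \<and> rational_on g V \<and> f ` U \<subseteq> V \<and> g ` V \<subseteq> U \<and>
        (\<forall>x\<in>U. g (f x) = x) \<and> (\<forall>y\<in>V. f (g y) = y))"

definition torus4 :: "(complex^4) set" where
  "torus4 = {x. \<forall>i. x $ i \<noteq> 0}"

definition C_eq :: "complex \<Rightarrow> complex \<Rightarrow> complex \<Rightarrow> complex" where
  "C_eq s u c = (s - 1/s) * (u - 1/u)
       + c * (1/(s^2 * u^2) - 1/u^2 - 1/s^2 + 4 - s^2 - u^2 + s^2 * u^2)
       + c^2 * (2/(s * u) - s/u - u/s + 2 * s * u) + c^3"

definition Cfrak :: "(complex^3) set" where
  "Cfrak = {p. p$1 \<noteq> 0 \<and> p$2 \<noteq> 0 \<and> C_eq (p$1) (p$2) (p$3) = 0}"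

definition e_map :: "complex^3 \<Rightarrow> complex^4" where
  "e_map p = (let s = p$1; u = p$2; c = p$3;
     t = 1/s^2 - u^2/s^2 + u^2 + c * (2 * u/s + 1/(s^3 * u) - u/s^3) + c^2/s^2;
     v = 1/u^2 - s^2/u^2 + s^2 + c * (2 * s/u + 1/(u^3 * s) - s/u^3) + c^2/u^2
   in vector [s, t, u, v])"

definition E0 :: "(complex^4) set" where
  "E0 = zariski_closure (e_map ` Cfrak) \<inter> torus4"

definition Cbar_eq :: "complex \<Rightarrow> complex \<Rightarrow> complex \<Rightarrow> complex" where
  "Cbar_eq s u d = s * u * (s - 1) * (u - 1)
       + d * (1 - s - u + 4 * s * u - s^2 * u - s * u^2 + s^2 * u^2)
       + d^2 * (2 - s - u + 2 * s * u) + d^3"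

definition Cbar :: "(complex^3) set" where
  "Cbar = {p. p$1 \<noteq> 0 \<and> p$2 \<noteq> 0 \<and> Cbar_eq (p$1) (p$2) (p$3) = 0}"

definition ebar_map :: "complex^3 \<Rightarrow> complex^4" where
  "ebar_map p = (let s = p$1; u = p$2; d = p$3;
     t = 1/s - u/s + u + d * (2/s + 1/(s^2 * u) - 1/s^2) + d^2/(s^2 * u);
     v = 1/u - s/u + s + d * (2/u + 1/(u^2 * s) - 1/u^2) + d^2/(u^2 * s)
   in vector [s, t, u, v])"

definition E0bar :: "(complex^4) set" where
  "E0bar = zariski_closure (ebar_map ` Cbar) \<inter> torus4"

end

theory Submission
  imports Defs "HOL-Computational_Algebra.Fundamental_Theorem_Algebra"
begin

(*
  The maps e and ebar are injective with explicit rational inverses. On the image of e one has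
  t s^2 - v u^2 = (s^2 - u^2) (1 + c/(s u)), and on the image of ebar t s - v u = (s - u) (1 + d/(s u)),
  so away from s^2 = u^2 (resp. s = u) the missing coordinate is a rational function of (s, t, u, v).
  Substituting it into the defining relations of the graph and clearing denominators gives polynomial
  identities on the image, which persist on its Zariski closure; this makes the inverse land back in
  the curve. The excluded loci are nowhere dense: with u fixed, the roots of the monic cubic in c
  depend continuously on s, so every point of the curve is a Euclidean, hence Zariski, limit of points
  off the locus.
*)

section \<open>Roots of monic polynomials\<close>

lemma monic_poly_root_near:
  fixes p :: "complex poly"
  assumes "lead_coeff p = 1" "degree p > 0"
  shows "\<exists>r. poly p r = 0 \<and> norm (r - c) ^ degree p \<le> norm (poly p c)"
  using assms
proof (induction "degree p" arbitrary: p rule: less_induct)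
  case less
  have "\<not> constant (poly p)"
    using less.prems by (simp add: constant_degree)
  then obtain r where r: "poly p r = 0"
    using fundamental_theorem_of_algebra by blast
  then obtain q where pq: "p = [:-r, 1:] * q"
    by (auto simp: poly_eq_0_iff_dvd)
  have q_monic: "lead_coeff q = 1"
    using less.prems(1) lead_coeff_mult[of "[:-r, 1:]" q] by (simp only: pq) simp
  then have "q \<noteq> 0" by auto
  then have deg: "degree p = Suc (degree q)"
    using degree_mult_eq[of "[:-r, 1:]" q] by (simp only: pq) simp
  have val: "norm (poly p c) = norm (r - c) * norm (poly q c)"
    by (simp add: pq norm_minus_commute flip: norm_mult left_diff_distrib)
  show ?case
  proof (cases "degree q = 0")
    case True
    then have "q = 1"
      using q_monic degree_0_id[of q] by (simp add: one_pCons)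
    then show ?thesis using r val deg by auto
  next
    case False
    then obtain r' where r': "poly q r' = 0" "norm (r' - c) ^ degree q \<le> norm (poly q c)"
      using less.hyps[of q] deg q_monic by auto
    show ?thesis
    proof (cases "norm (r' - c) \<le> norm (r - c)")
      case True
      have "norm (r' - c) ^ degree p = norm (r' - c) * norm (r' - c) ^ degree q"
        by (simp add: deg)
      also have "\<dots> \<le> norm (r - c) * norm (poly q c)"
        using True r'(2) by (intro mult_mono) auto
      finally show ?thesis using r' val by (auto simp: pq)
    next
      case False
      have "norm (r - c) ^ degree p = norm (r - c) * norm (r - c) ^ degree q"
        by (simp add: deg)
      also have "\<dots> \<le> norm (r - c) * norm (r' - c) ^ degree q"
        using False by (intro mult_left_mono power_mono) auto
      also have "\<dots> \<le> norm (r - c) * norm (poly q c)"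
        using r'(2) by (intro mult_left_mono) auto
      finally show ?thesis using r val by auto
    qed
  qed
qed

lemma tendsto_root_of_monic:
  fixes p :: "'a \<Rightarrow> complex poly"
  assumes monic: "\<And>z. lead_coeff (p z) = 1" and deg: "\<And>z. degree (p z) = n" "n > 0"
    and small: "((\<lambda>z. poly (p z) c) \<longlongrightarrow> 0) F"
  shows "\<exists>R. (R \<longlongrightarrow> c) F \<and> (\<forall>z. poly (p z) (R z) = 0)"
proof -
  have "\<forall>z. \<exists>r. poly (p z) r = 0 \<and> norm (r - c) ^ n \<le> norm (poly (p z) c)"
    using monic_poly_root_near monic deg by metis
  then obtain R where R: "\<And>z. poly (p z) (R z) = 0" "\<And>z. norm (R z - c) ^ n \<le> norm (poly (p z) c)"
    by metis
  have "norm (R z - c) \<le> root n (norm (poly (p z) c))" for z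
    using R(2)[of z] \<open>n > 0\<close> by (metis norm_ge_zero real_root_le_iff real_root_power_cancel)
  moreover have "((\<lambda>z. root n (norm (poly (p z) c))) \<longlongrightarrow> 0) F"
    using tendsto_real_root[OF tendsto_norm[OF small], of n] by simp
  ultimately have "((\<lambda>z. R z - c) \<longlongrightarrow> 0) F"
    by (rule Lim_null_comparison[OF always_eventually[OF allI]])
  then show ?thesis
    using R(1) by (auto simp: LIM_zero_iff)
qed

lemma polyfun_continuous: "polyfun f \<Longrightarrow> continuous_on UNIV f"
  by (induction rule: polyfun.induct) (auto intro!: continuous_intros)

lemma polyfun_diff: "polyfun f \<Longrightarrow> polyfun g \<Longrightarrow> polyfun (\<lambda>x. f x - g x)"
  using pf_add[OF _ pf_mult[OF pf_const[of "-1"]]] by fastforce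

lemma polyfun_power: "polyfun f \<Longrightarrow> polyfun (\<lambda>x. f x ^ n)"
  by (induction n) (auto intro: pf_mult pf_const)

lemmas polyfun_intros = pf_const pf_coord pf_add pf_mult polyfun_diff polyfun_power

lemma zariski_closed_zero_set: "polyfun f \<Longrightarrow> zariski_closed {x. f x = 0}"
  unfolding zariski_closed_def by (rule exI[of _ "{f}"]) auto

lemma zariski_closed_imp_closed:
  assumes "zariski_closed S"
  shows "closed S"
proof -
  from assms obtain F where F: "\<forall>f\<in>F. polyfun f" and S: "S = (\<Inter>f\<in>F. {x. f x = 0})"
    unfolding zariski_closed_def by auto
  show "closed S"
    unfolding S using F by (intro closed_INT ballI closed_Collect_eq continuous_on_const polyfun_continuous) auto
qed

lemma subset_zariski_closure: "A \<subseteq> zariski_closure A"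
  unfolding zariski_closure_def by auto

lemma zariski_closure_mono: "A \<subseteq> B \<Longrightarrow> zariski_closure A \<subseteq> zariski_closure B"
  unfolding zariski_closure_def by auto

lemma zariski_closure_closure: "zariski_closure (closure A) = zariski_closure A"
  unfolding zariski_closure_def
  by (metis (no_types) closure_subset closure_minimal zariski_closed_imp_closed order_trans)

lemma closure_subset_zariski_closure: "closure A \<subseteq> zariski_closure A"
  using zariski_closure_closure[of A] unfolding zariski_closure_def by auto

lemma polyfun_zero_on_zariski_closure:
  assumes "polyfun f" "\<And>x. x \<in> A \<Longrightarrow> f x = 0" "y \<in> zariski_closure A"
  shows "f y = 0"
  using assms zariski_closed_zero_set[OF assms(1)] unfolding zariski_closure_def by auto

lemma image_subset_closure_image:
  assumes "continuous_on X f" "U \<subseteq> X" "X \<subseteq> closure U"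
  shows "f ` X \<subseteq> closure (f ` U)"
proof -
  have "top_of_set X closure_of U = X"
    using assms(2,3) by (auto simp: closure_of_subtopology Int_absorb1)
  then show ?thesis
    using continuous_map_image_closure_subset[of "top_of_set X" euclidean f U] assms(1) by simp
qed

section \<open>A criterion for birational equivalence\<close>

lemma rational_onI:
  assumes "\<And>i. \<exists>P Q. polyfun P \<and> polyfun Q \<and> (\<forall>x\<in>U. Q x \<noteq> 0 \<and> f x $ i = P x / Q x)"
  shows "rational_on f U"
proof -
  from assms obtain P Q where "\<And>i. polyfun (P i) \<and> polyfun (Q i) \<and>
      (\<forall>x\<in>U. Q i x \<noteq> 0 \<and> f x $ i = P i x / Q i x)"
    by metis
  then show ?thesis
    unfolding rational_on_def by blast
qed

lemma rational_on_coords_quotient: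
  fixes N D :: "complex^'n \<Rightarrow> complex"
  assumes "polyfun N" "polyfun D"
  shows "rational_on (\<lambda>y. vector [y$i, y$j, N y / D y] :: complex^3) (Y - {y. D y = 0})"
proof (rule rational_onI)
  fix k :: 3
  consider "k = 1" | "k = 2" | "k = 3"
    using exhaust_3 by blast
  then show "\<exists>P Q. polyfun P \<and> polyfun Q \<and> (\<forall>y\<in>Y - {y. D y = 0}.
      Q y \<noteq> 0 \<and> (vector [y$i, y$j, N y / D y] :: complex^3) $ k = P y / Q y)"
  proof cases
    case 1
    show ?thesis
      by (intro exI[of _ "\<lambda>y. y$i"] exI[of _ "\<lambda>y. 1"]) (auto simp: 1 intro: polyfun_intros)
  next
    case 2
    show ?thesis
      by (intro exI[of _ "\<lambda>y. y$j"] exI[of _ "\<lambda>y. 1"]) (auto simp: 2 intro: polyfun_intros)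
  next
    case 3
    show ?thesis
      by (intro exI[of _ N] exI[of _ D]) (auto simp: 3 assms)
  qed
qed

lemma birationally_equivalent_zariski_closure_image:
  fixes e :: "complex^'m \<Rightarrow> complex^'n" and g :: "complex^'n \<Rightarrow> complex^'m"
    and X :: "(complex^'m) set" and T :: "(complex^'n) set"
  defines "E \<equiv> zariski_closure (e ` X) \<inter> T"
  assumes "polyfun Du" "polyfun Dv"
    and dense: "X \<subseteq> closure (X - {x. Du x = 0})"
    and cont: "continuous_on X e" and "e ` X \<subseteq> T"
    and "rational_on e (X - {x. Du x = 0})" "rational_on g (E - {y. Dv y = 0})"
    and left_inverse: "\<And>x. x \<in> X \<Longrightarrow> Du x \<noteq> 0 \<Longrightarrow> Dv (e x) \<noteq> 0 \<and> g (e x) = x"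
    and right_inverse: "\<And>y. y \<in> E \<Longrightarrow> Dv y \<noteq> 0 \<Longrightarrow> g y \<in> X \<and> Du (g y) \<noteq> 0 \<and> e (g y) = y"
  shows "birationally_equivalent X E"
proof -
  define U where "U = X - {x. Du x = 0}"
  define V where "V = E - {y. Dv y = 0}"
  have eU: "e ` U \<subseteq> V"
    using \<open>e ` X \<subseteq> T\<close> left_inverse subset_zariski_closure[of "e ` X"]
    unfolding U_def V_def E_def by auto
  have "U \<subseteq> X" by (auto simp: U_def)
  have "X \<subseteq> zariski_closure U"
    using dense closure_subset_zariski_closure unfolding U_def by blast
  moreover have "E \<subseteq> zariski_closure V"
  proof -
    have "e ` X \<subseteq> closure V"
      using image_subset_closure_image[OF cont \<open>U \<subseteq> X\<close>] dense closure_mono[OF eU]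
      unfolding U_def by blast
    then have "zariski_closure (e ` X) \<subseteq> zariski_closure V"
      using zariski_closure_mono zariski_closure_closure by metis
    then show ?thesis unfolding E_def by blast
  qed
  ultimately have "open_dense_in U X" "open_dense_in V E"
    unfolding open_dense_in_def U_def V_def
    using zariski_closed_zero_set \<open>polyfun Du\<close> \<open>polyfun Dv\<close> by auto
  moreover have "g ` V \<subseteq> U"
    using right_inverse unfolding U_def V_def by auto
  ultimately show ?thesis
    unfolding birationally_equivalent_def using assms eU
    by (intro exI[of _ U] exI[of _ V] exI[of _ e] exI[of _ g]) (auto simp: U_def V_def)
qed

lemma dense_in_monic_hypersurface:
  fixes F :: "complex \<Rightarrow> complex \<Rightarrow> complex poly" and D :: "complex \<Rightarrow> complex \<Rightarrow> complex"
  defines "X \<equiv> {p :: complex^3. p$1 \<noteq> 0 \<and> p$2 \<noteq> 0 \<and> poly (F (p$1) (p$2)) (p$3) = 0}"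
  assumes monic: "\<And>s u. lead_coeff (F s u) = 1" and deg: "\<And>s u. degree (F s u) = n" "n > 0"
    and cont: "\<And>s u c. s \<noteq> 0 \<Longrightarrow> u \<noteq> 0 \<Longrightarrow> isCont (\<lambda>s. poly (F s u) c) s"
    and disc: "\<And>u. u \<noteq> 0 \<Longrightarrow> finite {s. D s u = 0}"
  shows "X \<subseteq> closure {p \<in> X. D (p$1) (p$2) \<noteq> 0}"
proof
  fix x assume "x \<in> X"
  define s0 u0 c0 where "s0 = x$1" and "u0 = x$2" and "c0 = x$3"
  have "s0 \<noteq> 0" "u0 \<noteq> 0" "poly (F s0 u0) c0 = 0"
    using \<open>x \<in> X\<close> by (auto simp: X_def s0_def u0_def c0_def)
  then have "((\<lambda>s. poly (F s u0) c0) \<longlongrightarrow> 0) (at s0)"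
    using cont[of s0 u0 c0] by (simp add: isCont_def)
  then obtain R where R: "(R \<longlongrightarrow> c0) (at s0)" "\<And>s. poly (F s u0) (R s) = 0"
    using tendsto_root_of_monic[of "\<lambda>s. F s u0"] monic deg by blast
  define P where "P s = (vector [s, u0, R s] :: complex^3)" for s
  have "(P \<longlongrightarrow> x) (at s0)"
  proof (rule vec_tendstoI)
    fix i :: 3
    show "((\<lambda>s. P s $ i) \<longlongrightarrow> x $ i) (at s0)"
      using exhaust_3[of i] R(1) by (auto simp: P_def s0_def u0_def c0_def)
  qed
  moreover have "eventually (\<lambda>s. s \<notin> insert 0 {s. D s u0 = 0}) (at s0)"
    using islimpt_finite[of "insert 0 {s. D s u0 = 0}" s0] disc[OF \<open>u0 \<noteq> 0\<close>]
    by (simp only: islimpt_iff_eventually finite_insert not_not)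
  then have "eventually (\<lambda>s. P s \<in> closure {p \<in> X. D (p$1) (p$2) \<noteq> 0}) (at s0)"
    by eventually_elim (use R(2) \<open>u0 \<noteq> 0\<close> in \<open>auto simp: P_def X_def intro: closure_subset[THEN subsetD]\<close>)
  ultimately show "x \<in> closure {p \<in> X. D (p$1) (p$2) \<noteq> 0}"
    by (intro Lim_in_closed_set[of _ P]) auto
qed

section \<open>The SL(2,C) eigenvalue variety\<close>

definition e_t :: "complex \<Rightarrow> complex \<Rightarrow> complex \<Rightarrow> complex" where
  "e_t s u c = 1/s^2 - u^2/s^2 + u^2 + c * (2 * u/s + 1/(s^3 * u) - u/s^3) + c^2/s^2"

definition e_t_numer :: "complex \<Rightarrow> complex \<Rightarrow> complex \<Rightarrow> complex" where
  "e_t_numer s u c = s * u - s * u^3 + s^3 * u^3 + c * (2 * s^2 * u^2 + 1 - u^2) + c^2 * s * u"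

lemma e_map_nth:
  "e_map p $ 1 = p$1" "e_map p $ 2 = e_t (p$1) (p$2) (p$3)"
  "e_map p $ 3 = p$2" "e_map p $ 4 = e_t (p$2) (p$1) (p$3)"
  unfolding e_map_def e_t_def Let_def vector_def by simp_all

lemma e_t_eq_numer: "s \<noteq> 0 \<Longrightarrow> u \<noteq> 0 \<Longrightarrow> e_t s u c = e_t_numer s u c / (s^3 * u)"
  unfolding e_t_def e_t_numer_def by (simp add: field_simps) algebra

lemma C_eq_commute: "C_eq u s c = C_eq s u c"
  unfolding C_eq_def by (simp add: algebra_simps)

lemma C_eq_cleared: "s \<noteq> 0 \<Longrightarrow> u \<noteq> 0 \<Longrightarrow> C_eq s u c * (s^2 * u^2) =
   (s^2 - 1) * (u^2 - 1) * s * u + c * (1 - s^2 - u^2 + 4 * s^2 * u^2 - s^4 * u^2 - s^2 * u^4 + s^4 * u^4)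
   + c^2 * (2 * s * u - s^3 * u - s * u^3 + 2 * s^3 * u^3) + c^3 * s^2 * u^2"
  unfolding C_eq_def by (simp add: field_simps) algebra

lemma e_t_nonzero:
  assumes "s \<noteq> 0" "u \<noteq> 0" "C_eq s u c = 0"
  shows "e_t s u c \<noteq> 0"
proof -
  have "e_t_numer s u c * (1 + 2 * s * u * c - s^2 + s^2 * u^2 + s^2 * u^2 * c^2 - s^3 * u * c + s^3 * u^3 * c)
      = s^3 * u^3 + (1 + s * u * c + s^2 * u^2) * (C_eq s u c * (s^2 * u^2))"
    unfolding e_t_numer_def C_eq_cleared[OF assms(1,2)] by algebra
  then show ?thesis
    using assms by (auto simp: e_t_eq_numer)
qed

definition C_cubic :: "complex \<Rightarrow> complex \<Rightarrow> complex poly" where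
  "C_cubic s u = [:(s - 1/s) * (u - 1/u),
      1/(s^2 * u^2) - 1/u^2 - 1/s^2 + 4 - s^2 - u^2 + s^2 * u^2,
      2/(s * u) - s/u - u/s + 2 * s * u, 1:]"

lemma poly_C_cubic: "poly (C_cubic s u) c = C_eq s u c"
  unfolding C_cubic_def C_eq_def by (simp add: algebra_simps power2_eq_square power3_eq_cube)

lemma Cfrak_dense: "Cfrak \<subseteq> closure (Cfrak - {p. (p$1)^2 - (p$2)^2 = 0})"
proof -
  have "finite {s. s^2 - u^2 = 0}" for u :: complex
    by (rule finite_subset[of _ "{u, -u}"]) (auto simp: power2_eq_iff)
  moreover have "isCont (\<lambda>s. poly (C_cubic s u) c) s" if "s \<noteq> 0" "u \<noteq> 0" for s u c
    using that unfolding poly_C_cubic C_eq_def by (intro continuous_intros) auto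
  moreover have "lead_coeff (C_cubic s u) = 1" "degree (C_cubic s u) = 3" for s u
    by (simp_all add: C_cubic_def)
  ultimately have "Cfrak \<subseteq> closure {p \<in> Cfrak. (p$1)^2 - (p$2)^2 \<noteq> 0}"
    using dense_in_monic_hypersurface[of C_cubic 3 "\<lambda>s u. s^2 - u^2"]
    by (simp add: Cfrak_def poly_C_cubic)
  then show ?thesis
    by (simp add: set_diff_eq)
qed

lemma continuous_on_e_map: "continuous_on Cfrak e_map"
proof -
  have "continuous_on Cfrak (\<lambda>p. e_map p $ i)" for i
    using exhaust_4[of i]
    by (elim disjE) (simp_all only: e_map_nth, auto simp: Cfrak_def e_t_def intro!: continuous_intros)
  then show ?thesis
    using continuous_on_vec_lambda[of Cfrak "\<lambda>i p. e_map p $ i"] by (simp add: vec_lambda_eta)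
qed

lemma e_map_in_torus: "p \<in> Cfrak \<Longrightarrow> e_map p \<in> torus4"
  using e_t_nonzero[of "p$1" "p$2" "p$3"] e_t_nonzero[of "p$2" "p$1" "p$3"]
  by (auto simp: torus4_def forall_4 e_map_nth Cfrak_def C_eq_commute)

lemma polyfun_e_t_numer:
  "polyfun (\<lambda>x. e_t_numer (x$i) (x$j) (x$k))"
  unfolding e_t_numer_def by (intro polyfun_intros)

lemma rational_on_e_map: "rational_on e_map (Cfrak - {p. (p$1)^2 - (p$2)^2 = 0})"
proof (rule rational_onI)
  fix i :: 4
  have nz: "p$1 \<noteq> 0" "p$2 \<noteq> 0" if "p \<in> Cfrak" for p
    using that by (auto simp: Cfrak_def)
  consider "i = 1" | "i = 2" | "i = 3" | "i = 4"
    using exhaust_4 by blast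
  then show "\<exists>P Q. polyfun P \<and> polyfun Q \<and>
      (\<forall>p\<in>Cfrak - {p. (p$1)^2 - (p$2)^2 = 0}. Q p \<noteq> 0 \<and> e_map p $ i = P p / Q p)"
  proof cases
    case 1
    show ?thesis
      by (intro exI[of _ "\<lambda>p. p$1"] exI[of _ "\<lambda>p. 1"]) (auto simp: 1 e_map_nth intro: polyfun_intros)
  next
    case 2
    show ?thesis
      by (intro exI[of _ "\<lambda>p. e_t_numer (p$1) (p$2) (p$3)"] exI[of _ "\<lambda>p. p$1^3 * p$2"])
        (auto simp: 2 e_map_nth e_t_eq_numer nz polyfun_e_t_numer intro!: polyfun_intros)
  next
    case 3
    show ?thesis
      by (intro exI[of _ "\<lambda>p. p$2"] exI[of _ "\<lambda>p. 1"]) (auto simp: 3 e_map_nth intro: polyfun_intros)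
  next
    case 4
    show ?thesis
      by (intro exI[of _ "\<lambda>p. e_t_numer (p$2) (p$1) (p$3)"] exI[of _ "\<lambda>p. p$2^3 * p$1"])
        (auto simp: 4 e_map_nth e_t_eq_numer nz polyfun_e_t_numer intro!: polyfun_intros)
  qed
qed

definition e_inv_denom :: "complex^4 \<Rightarrow> complex" where
  "e_inv_denom y = (y$1)^2 - (y$3)^2"

definition e_inv_numer :: "complex^4 \<Rightarrow> complex" where
  "e_inv_numer y = y$1 * y$3 * (y$2 * (y$1)^2 - y$4 * (y$3)^2 - e_inv_denom y)"

definition e_inv :: "complex^4 \<Rightarrow> complex^3" where
  "e_inv y = vector [y$1, y$3, e_inv_numer y / e_inv_denom y]"

lemma e_inv_numer_e_map:
  assumes "p$1 \<noteq> 0" "p$2 \<noteq> 0"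
  shows "e_inv_numer (e_map p) = p$3 * e_inv_denom (e_map p)"
  using assms unfolding e_inv_numer_def e_inv_denom_def e_map_nth e_t_def
  by (simp add: field_simps) algebra

definition t_relation :: "complex \<Rightarrow> complex \<Rightarrow> complex \<Rightarrow> complex \<Rightarrow> complex \<Rightarrow> complex" where
  "t_relation s t u N D = D^2 * (t * s^3 * u - s * u + s * u^3 - s^3 * u^3)
     - N * D * (2 * s^2 * u^2 + 1 - u^2) - N^2 * s * u"

definition C_relation :: "complex \<Rightarrow> complex \<Rightarrow> complex \<Rightarrow> complex \<Rightarrow> complex" where
  "C_relation s u N D = D^3 * ((s^2 - 1) * (u^2 - 1) * s * u)
     + N * D^2 * (1 - s^2 - u^2 + 4 * s^2 * u^2 - s^4 * u^2 - s^2 * u^4 + s^4 * u^4)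
     + N^2 * D * (2 * s * u - s^3 * u - s * u^3 + 2 * s^3 * u^3) + N^3 * s^2 * u^2"

lemma t_relation_scaled: "t_relation s t u (c * D) D = D^2 * (t * s^3 * u - e_t_numer s u c)"
  unfolding t_relation_def e_t_numer_def by (simp add: algebra_simps power2_eq_square)

lemma C_relation_scaled:
  "s \<noteq> 0 \<Longrightarrow> u \<noteq> 0 \<Longrightarrow> C_relation s u (c * D) D = D^3 * (C_eq s u c * (s^2 * u^2))"
  unfolding C_relation_def C_eq_cleared by (simp add: algebra_simps power2_eq_square power3_eq_cube)

lemma relations_on_zariski_closure_e_map:
  fixes y :: "complex^4"
  defines "N \<equiv> e_inv_numer y" and "D \<equiv> e_inv_denom y"
  assumes "y \<in> zariski_closure (e_map ` Cfrak)"
  shows "t_relation (y$1) (y$2) (y$3) N D = 0" "t_relation (y$3) (y$4) (y$1) N D = 0"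
    "C_relation (y$1) (y$3) N D = 0"
proof -
  have vanish: "t_relation (z$1) (z$2) (z$3) (e_inv_numer z) (e_inv_denom z) = 0 \<and>
      t_relation (z$3) (z$4) (z$1) (e_inv_numer z) (e_inv_denom z) = 0 \<and>
      C_relation (z$1) (z$3) (e_inv_numer z) (e_inv_denom z) = 0" if "z \<in> e_map ` Cfrak" for z
  proof -
    from that obtain p where "p \<in> Cfrak" and z: "z = e_map p" by blast
    then have nz: "p$1 \<noteq> 0" "p$2 \<noteq> 0" and "C_eq (p$1) (p$2) (p$3) = 0"
      by (auto simp: Cfrak_def)
    then show ?thesis
      unfolding z e_inv_numer_e_map[OF nz] t_relation_scaled C_relation_scaled[OF nz] e_map_nth
      using nz by (simp add: e_t_eq_numer)
  qed
  have "polyfun (\<lambda>y. t_relation (y$i) (y$j) (y$k) (e_inv_numer y) (e_inv_denom y))" for i j k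
    unfolding t_relation_def e_inv_numer_def e_inv_denom_def by (intro polyfun_intros)
  moreover have "polyfun (\<lambda>y. C_relation (y$1) (y$3) (e_inv_numer y) (e_inv_denom y))"
    unfolding C_relation_def e_inv_numer_def e_inv_denom_def by (intro polyfun_intros)
  ultimately show "t_relation (y$1) (y$2) (y$3) N D = 0" "t_relation (y$3) (y$4) (y$1) N D = 0"
    "C_relation (y$1) (y$3) N D = 0"
    using polyfun_zero_on_zariski_closure[OF _ _ assms(3)] vanish unfolding N_def D_def by meson+
qed

lemma e_map_e_inv:
  assumes y: "y \<in> E0" and D: "e_inv_denom y \<noteq> 0"
  shows "e_inv y \<in> Cfrak \<and> (e_inv y $ 1)^2 - (e_inv y $ 2)^2 \<noteq> 0 \<and> e_map (e_inv y) = y"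
proof -
  define s u c where "s = y$1" and "u = y$3" and "c = e_inv_numer y / e_inv_denom y"
  have nz: "s \<noteq> 0" "u \<noteq> 0"
    using y by (auto simp: E0_def torus4_def s_def u_def)
  have N: "e_inv_numer y = c * e_inv_denom y"
    using D by (simp add: c_def)
  note rel = relations_on_zariski_closure_e_map[of y, unfolded N t_relation_scaled]
  have "y$2 * s^3 * u = e_t_numer s u c" "y$4 * u^3 * s = e_t_numer u s c"
    using rel(1,2) y D by (auto simp: E0_def s_def u_def)
  then have "e_t s u c = y$2" "e_t u s c = y$4"
    using nz by (simp_all add: e_t_eq_numer field_simps)
  moreover have "C_eq s u c = 0"
    using rel(3) y D nz by (auto simp: E0_def s_def u_def C_relation_scaled)
  moreover have "e_inv y = vector [s, u, c]"
    by (simp add: e_inv_def s_def u_def c_def)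
  ultimately show ?thesis
    using nz D by (auto simp: Cfrak_def vec_eq_iff forall_4 e_map_nth e_inv_denom_def s_def u_def)
qed

lemma e_inv_e_map:
  assumes "p \<in> Cfrak" "(p$1)^2 - (p$2)^2 \<noteq> 0"
  shows "e_inv_denom (e_map p) \<noteq> 0 \<and> e_inv (e_map p) = p"
proof -
  have nz: "p$1 \<noteq> 0" "p$2 \<noteq> 0"
    using assms(1) by (auto simp: Cfrak_def)
  have "e_inv_denom (e_map p) = (p$1)^2 - (p$2)^2"
    by (simp add: e_inv_denom_def e_map_nth)
  then show ?thesis
    using assms(2) e_inv_numer_e_map[OF nz] by (simp add: e_inv_def vec_eq_iff forall_3 e_map_nth)
qed

lemma birationally_equivalent_Cfrak_E0: "birationally_equivalent Cfrak E0"
  unfolding E0_def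
proof (rule birationally_equivalent_zariski_closure_image)
  show "polyfun (\<lambda>p::complex^3. (p$1)^2 - (p$2)^2)" "polyfun e_inv_denom"
    unfolding e_inv_denom_def by (intro polyfun_intros)+
  show "rational_on e_inv (zariski_closure (e_map ` Cfrak) \<inter> torus4 - {y. e_inv_denom y = 0})"
    unfolding e_inv_def e_inv_numer_def e_inv_denom_def
    by (intro rational_on_coords_quotient polyfun_intros)
qed (use Cfrak_dense continuous_on_e_map e_map_in_torus rational_on_e_map e_inv_e_map e_map_e_inv
  in \<open>auto simp: E0_def\<close>)

section \<open>The PSL(2,C) eigenvalue variety\<close>

definition ebar_t :: "complex \<Rightarrow> complex \<Rightarrow> complex \<Rightarrow> complex" where
  "ebar_t s u d = 1/s - u/s + u + d * (2/s + 1/(s^2 * u) - 1/s^2) + d^2/(s^2 * u)"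

definition ebar_t_numer :: "complex \<Rightarrow> complex \<Rightarrow> complex \<Rightarrow> complex" where
  "ebar_t_numer s u d = s * u - s * u^2 + s^2 * u^2 + d * (2 * s * u + 1 - u) + d^2"

lemma ebar_map_nth:
  "ebar_map p $ 1 = p$1" "ebar_map p $ 2 = ebar_t (p$1) (p$2) (p$3)"
  "ebar_map p $ 3 = p$2" "ebar_map p $ 4 = ebar_t (p$2) (p$1) (p$3)"
  unfolding ebar_map_def ebar_t_def Let_def vector_def by simp_all

lemma ebar_t_eq_numer: "s \<noteq> 0 \<Longrightarrow> u \<noteq> 0 \<Longrightarrow> ebar_t s u d = ebar_t_numer s u d / (s^2 * u)"
  unfolding ebar_t_def ebar_t_numer_def by (simp add: field_simps) algebra

lemma Cbar_eq_commute: "Cbar_eq u s d = Cbar_eq s u d"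
  unfolding Cbar_eq_def by (simp add: algebra_simps)

lemma ebar_t_nonzero:
  assumes "s \<noteq> 0" "u \<noteq> 0" "Cbar_eq s u d = 0"
  shows "ebar_t s u d \<noteq> 0"
proof -
  have "ebar_t_numer s u d * (1 + 2 * d + d^2 - s - s * d + s * u + s * u * d)
      = s^2 * u^2 + (1 + d + s * u) * Cbar_eq s u d"
    unfolding ebar_t_numer_def Cbar_eq_def by algebra
  then show ?thesis
    using assms by (auto simp: ebar_t_eq_numer)
qed

definition Cbar_cubic :: "complex \<Rightarrow> complex \<Rightarrow> complex poly" where
  "Cbar_cubic s u = [:s * u * (s - 1) * (u - 1),
      1 - s - u + 4 * s * u - s^2 * u - s * u^2 + s^2 * u^2, 2 - s - u + 2 * s * u, 1:]"

lemma poly_Cbar_cubic: "poly (Cbar_cubic s u) d = Cbar_eq s u d"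
  unfolding Cbar_cubic_def Cbar_eq_def by (simp add: algebra_simps power2_eq_square power3_eq_cube)

lemma Cbar_dense: "Cbar \<subseteq> closure (Cbar - {p. p$1 - p$2 = 0})"
proof -
  have "finite {s. s - u = 0}" for u :: complex
    by simp
  moreover have "isCont (\<lambda>s. poly (Cbar_cubic s u) d) s" for s u d
    unfolding poly_Cbar_cubic Cbar_eq_def by (intro continuous_intros)
  moreover have "lead_coeff (Cbar_cubic s u) = 1" "degree (Cbar_cubic s u) = 3" for s u
    by (simp_all add: Cbar_cubic_def)
  ultimately have "Cbar \<subseteq> closure {p \<in> Cbar. p$1 - p$2 \<noteq> 0}"
    using dense_in_monic_hypersurface[of Cbar_cubic 3 "\<lambda>s u. s - u"]
    by (simp add: Cbar_def poly_Cbar_cubic)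
  then show ?thesis
    by (simp add: set_diff_eq)
qed

lemma continuous_on_ebar_map: "continuous_on Cbar ebar_map"
proof -
  have "continuous_on Cbar (\<lambda>p. ebar_map p $ i)" for i
    using exhaust_4[of i]
    by (elim disjE) (simp_all only: ebar_map_nth, auto simp: Cbar_def ebar_t_def intro!: continuous_intros)
  then show ?thesis
    using continuous_on_vec_lambda[of Cbar "\<lambda>i p. ebar_map p $ i"] by (simp add: vec_lambda_eta)
qed

lemma ebar_map_in_torus: "p \<in> Cbar \<Longrightarrow> ebar_map p \<in> torus4"
  using ebar_t_nonzero[of "p$1" "p$2" "p$3"] ebar_t_nonzero[of "p$2" "p$1" "p$3"]
  by (auto simp: torus4_def forall_4 ebar_map_nth Cbar_def Cbar_eq_commute)

lemma polyfun_ebar_t_numer: "polyfun (\<lambda>x. ebar_t_numer (x$i) (x$j) (x$k))"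
  unfolding ebar_t_numer_def by (intro polyfun_intros)

lemma rational_on_ebar_map: "rational_on ebar_map (Cbar - {p. p$1 - p$2 = 0})"
proof (rule rational_onI)
  fix i :: 4
  have nz: "p$1 \<noteq> 0" "p$2 \<noteq> 0" if "p \<in> Cbar" for p
    using that by (auto simp: Cbar_def)
  consider "i = 1" | "i = 2" | "i = 3" | "i = 4"
    using exhaust_4 by blast
  then show "\<exists>P Q. polyfun P \<and> polyfun Q \<and>
      (\<forall>p\<in>Cbar - {p. p$1 - p$2 = 0}. Q p \<noteq> 0 \<and> ebar_map p $ i = P p / Q p)"
  proof cases
    case 1
    show ?thesis
      by (intro exI[of _ "\<lambda>p. p$1"] exI[of _ "\<lambda>p. 1"]) (auto simp: 1 ebar_map_nth intro: polyfun_intros)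
  next
    case 2
    show ?thesis
      by (intro exI[of _ "\<lambda>p. ebar_t_numer (p$1) (p$2) (p$3)"] exI[of _ "\<lambda>p. p$1^2 * p$2"])
        (auto simp: 2 ebar_map_nth ebar_t_eq_numer nz polyfun_ebar_t_numer intro!: polyfun_intros)
  next
    case 3
    show ?thesis
      by (intro exI[of _ "\<lambda>p. p$2"] exI[of _ "\<lambda>p. 1"]) (auto simp: 3 ebar_map_nth intro: polyfun_intros)
  next
    case 4
    show ?thesis
      by (intro exI[of _ "\<lambda>p. ebar_t_numer (p$2) (p$1) (p$3)"] exI[of _ "\<lambda>p. p$2^2 * p$1"])
        (auto simp: 4 ebar_map_nth ebar_t_eq_numer nz polyfun_ebar_t_numer intro!: polyfun_intros)
  qed
qed

definition ebar_inv_denom :: "complex^4 \<Rightarrow> complex" where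
  "ebar_inv_denom y = y$1 - y$3"

definition ebar_inv_numer :: "complex^4 \<Rightarrow> complex" where
  "ebar_inv_numer y = y$1 * y$3 * (y$2 * y$1 - y$4 * y$3 - ebar_inv_denom y)"

definition ebar_inv :: "complex^4 \<Rightarrow> complex^3" where
  "ebar_inv y = vector [y$1, y$3, ebar_inv_numer y / ebar_inv_denom y]"

lemma ebar_inv_numer_ebar_map:
  assumes "p$1 \<noteq> 0" "p$2 \<noteq> 0"
  shows "ebar_inv_numer (ebar_map p) = p$3 * ebar_inv_denom (ebar_map p)"
  using assms unfolding ebar_inv_numer_def ebar_inv_denom_def ebar_map_nth ebar_t_def
  by (simp add: field_simps) algebra

definition tbar_relation :: "complex \<Rightarrow> complex \<Rightarrow> complex \<Rightarrow> complex \<Rightarrow> complex \<Rightarrow> complex" where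
  "tbar_relation s t u N D = D^2 * (t * s^2 * u - s * u + s * u^2 - s^2 * u^2)
     - N * D * (2 * s * u + 1 - u) - N^2"

definition Cbar_relation :: "complex \<Rightarrow> complex \<Rightarrow> complex \<Rightarrow> complex \<Rightarrow> complex" where
  "Cbar_relation s u N D = D^3 * (s * u * (s - 1) * (u - 1))
     + N * D^2 * (1 - s - u + 4 * s * u - s^2 * u - s * u^2 + s^2 * u^2)
     + N^2 * D * (2 - s - u + 2 * s * u) + N^3"

lemma tbar_relation_scaled: "tbar_relation s t u (d * D) D = D^2 * (t * s^2 * u - ebar_t_numer s u d)"
  unfolding tbar_relation_def ebar_t_numer_def by (simp add: algebra_simps power2_eq_square)

lemma Cbar_relation_scaled: "Cbar_relation s u (d * D) D = D^3 * Cbar_eq s u d"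
  unfolding Cbar_relation_def Cbar_eq_def by (simp add: algebra_simps power2_eq_square power3_eq_cube)

lemma relations_on_zariski_closure_ebar_map:
  fixes y :: "complex^4"
  defines "N \<equiv> ebar_inv_numer y" and "D \<equiv> ebar_inv_denom y"
  assumes "y \<in> zariski_closure (ebar_map ` Cbar)"
  shows "tbar_relation (y$1) (y$2) (y$3) N D = 0" "tbar_relation (y$3) (y$4) (y$1) N D = 0"
    "Cbar_relation (y$1) (y$3) N D = 0"
proof -
  have vanish: "tbar_relation (z$1) (z$2) (z$3) (ebar_inv_numer z) (ebar_inv_denom z) = 0 \<and>
      tbar_relation (z$3) (z$4) (z$1) (ebar_inv_numer z) (ebar_inv_denom z) = 0 \<and>
      Cbar_relation (z$1) (z$3) (ebar_inv_numer z) (ebar_inv_denom z) = 0" if "z \<in> ebar_map ` Cbar" for z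
  proof -
    from that obtain p where "p \<in> Cbar" and z: "z = ebar_map p" by blast
    then have nz: "p$1 \<noteq> 0" "p$2 \<noteq> 0" and "Cbar_eq (p$1) (p$2) (p$3) = 0"
      by (auto simp: Cbar_def)
    then show ?thesis
      unfolding z ebar_inv_numer_ebar_map[OF nz] tbar_relation_scaled Cbar_relation_scaled ebar_map_nth
      using nz by (simp add: ebar_t_eq_numer)
  qed
  have "polyfun (\<lambda>y. tbar_relation (y$i) (y$j) (y$k) (ebar_inv_numer y) (ebar_inv_denom y))" for i j k
    unfolding tbar_relation_def ebar_inv_numer_def ebar_inv_denom_def by (intro polyfun_intros)
  moreover have "polyfun (\<lambda>y. Cbar_relation (y$1) (y$3) (ebar_inv_numer y) (ebar_inv_denom y))"
    unfolding Cbar_relation_def ebar_inv_numer_def ebar_inv_denom_def by (intro polyfun_intros)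
  ultimately show "tbar_relation (y$1) (y$2) (y$3) N D = 0" "tbar_relation (y$3) (y$4) (y$1) N D = 0"
    "Cbar_relation (y$1) (y$3) N D = 0"
    using polyfun_zero_on_zariski_closure[OF _ _ assms(3)] vanish unfolding N_def D_def by meson+
qed

lemma ebar_map_ebar_inv:
  assumes y: "y \<in> E0bar" and D: "ebar_inv_denom y \<noteq> 0"
  shows "ebar_inv y \<in> Cbar \<and> ebar_inv y $ 1 - ebar_inv y $ 2 \<noteq> 0 \<and> ebar_map (ebar_inv y) = y"
proof -
  define s u d where "s = y$1" and "u = y$3" and "d = ebar_inv_numer y / ebar_inv_denom y"
  have nz: "s \<noteq> 0" "u \<noteq> 0"
    using y by (auto simp: E0bar_def torus4_def s_def u_def)
  have N: "ebar_inv_numer y = d * ebar_inv_denom y"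
    using D by (simp add: d_def)
  note rel = relations_on_zariski_closure_ebar_map[of y, unfolded N tbar_relation_scaled Cbar_relation_scaled]
  have "y$2 * s^2 * u = ebar_t_numer s u d" "y$4 * u^2 * s = ebar_t_numer u s d"
    using rel(1,2) y D by (auto simp: E0bar_def s_def u_def)
  then have "ebar_t s u d = y$2" "ebar_t u s d = y$4"
    using nz by (simp_all add: ebar_t_eq_numer field_simps)
  moreover have "Cbar_eq s u d = 0"
    using rel(3) y D by (auto simp: E0bar_def s_def u_def)
  moreover have "ebar_inv y = vector [s, u, d]"
    by (simp add: ebar_inv_def s_def u_def d_def)
  ultimately show ?thesis
    using nz D by (auto simp: Cbar_def vec_eq_iff forall_4 ebar_map_nth ebar_inv_denom_def s_def u_def)
qed

lemma ebar_inv_ebar_map: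
  assumes "p \<in> Cbar" "p$1 - p$2 \<noteq> 0"
  shows "ebar_inv_denom (ebar_map p) \<noteq> 0 \<and> ebar_inv (ebar_map p) = p"
proof -
  have nz: "p$1 \<noteq> 0" "p$2 \<noteq> 0"
    using assms(1) by (auto simp: Cbar_def)
  have "ebar_inv_denom (ebar_map p) = p$1 - p$2"
    by (simp add: ebar_inv_denom_def ebar_map_nth)
  then show ?thesis
    using assms(2) ebar_inv_numer_ebar_map[OF nz] by (simp add: ebar_inv_def vec_eq_iff forall_3 ebar_map_nth)
qed

lemma birationally_equivalent_Cbar_E0bar: "birationally_equivalent Cbar E0bar"
  unfolding E0bar_def
proof (rule birationally_equivalent_zariski_closure_image)
  show "polyfun (\<lambda>p::complex^3. p$1 - p$2)" "polyfun ebar_inv_denom"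
    unfolding ebar_inv_denom_def by (intro polyfun_intros)+
  show "rational_on ebar_inv (zariski_closure (ebar_map ` Cbar) \<inter> torus4 - {y. ebar_inv_denom y = 0})"
    unfolding ebar_inv_def ebar_inv_numer_def ebar_inv_denom_def
    by (intro rational_on_coords_quotient polyfun_intros)
qed (use Cbar_dense continuous_on_ebar_map ebar_map_in_torus rational_on_ebar_map ebar_inv_ebar_map
  ebar_map_ebar_inv in \<open>auto simp: E0bar_def\<close>)

theorem mainTheorem7:
  shows "birationally_equivalent Cfrak E0 \<and> birationally_equivalent Cbar E0bar"
  using birationally_equivalent_Cfrak_E0 birationally_equivalent_Cbar_E0bar by blast

end
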